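(* Let $k$ be a positive integer and let $T$ be a semi-complete digraph with $n$ vertices that admits an ordering $(v_1,\dots,v_n)$ of its vertices of width at most $k$. Let $T'$ be the transitive tournament on the same vertex set with $(v_i,v_j)\in E(T')$ iff $i<j$. Then every $k$-cut of $T$ is a $2k(1+\ln 2k)$-cut of $T'$.
   Context: A simple digraph (no loops, no multiple arcs) $T$ is semi-complete if for every pair of distinct vertices $v,w$ at least one of $(v,w),(w,v)$ is an arc. The width of an ordering $(v_1,\dots,v_n)$ of $V(T)$ is $\max_{1\le t\le n-1}|E(\{v_{t+1},\dots,v_n\},\{v_1,\dots,v_t\})|$, where $E(A,B)$ is the set of arcs with tail in $A$ and head in $B$. A $d$-cut of a digraph $T$ (for a real $d\ge0$) is an ordered partition $(X,Y)$ of $V(T)$ (either part may be empty) such that there are at most $d$ arcs $(u,v)\in E(T)$ with $u\in Y$ and $v\in X$. *)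

theory Defs
  imports Complex_Main
begin

definition semi_complete :: "'a set \<Rightarrow> ('a \<times> 'a) set \<Rightarrow> bool" where
  "semi_complete V E \<longleftrightarrow> finite V \<and> E \<subseteq> V \<times> V \<and> (\<forall>v. (v, v) \<notin> E) \<and>
     (\<forall>v\<in>V. \<forall>w\<in>V. v \<noteq> w \<longrightarrow> (v, w) \<in> E \<or> (w, v) \<in> E)"

definition arcs_between :: "('a \<times> 'a) set \<Rightarrow> 'a set \<Rightarrow> 'a set \<Rightarrow> ('a \<times> 'a) set" where
  "arcs_between E A B = {(u, v) \<in> E. u \<in> A \<and> v \<in> B}"

definition is_ordering :: "'a set \<Rightarrow> 'a list \<Rightarrow> bool" where
  "is_ordering V vs \<longleftrightarrow> distinct vs \<and> set vs = V"

definition ordering_width :: "('a \<times> 'a) set \<Rightarrow> 'a list \<Rightarrow> nat" where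
  "ordering_width E vs = Max ({card (arcs_between E (set (drop t vs)) (set (take t vs))) | t.
       1 \<le> t \<and> t \<le> length vs - 1} \<union> {0})"

definition is_d_cut :: "'a set \<Rightarrow> ('a \<times> 'a) set \<Rightarrow> real \<Rightarrow> 'a set \<Rightarrow> 'a set \<Rightarrow> bool" where
  "is_d_cut V E d X Y \<longleftrightarrow> X \<union> Y = V \<and> X \<inter> Y = {} \<and>
     real (card (arcs_between E Y X)) \<le> d"

definition transitive_tournament :: "'a list \<Rightarrow> ('a \<times> 'a) set" where
  "transitive_tournament vs = {(vs ! i, vs ! j) | i j. i < j \<and> j < length vs}"

end

theory Submission
  imports Defs "HOL-Analysis.Harmonic_Numbers"
begin

text \<open>
  For a position t of the ordering, every pair consisting of a vertex of Y before t and a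
  vertex of X after t is joined in T by an arc from Y to X (at most k of them) or by a backward
  arc of the ordering across t (at most k of them, by the width bound). Hence if the i-th vertex
  of Y is followed by c vertices of X, then i * c \<le> 2k. The arcs of T' from Y to X are exactly
  such pairs, so their number is at most the sum over i \<le> 2k of 2k/i, i.e. 2k times the
  harmonic number H(2k) \<le> 1 + ln 2k.
\<close>

lemma harm_le_one_plus_ln:
  assumes "n > 0"
  shows "harm n \<le> 1 + ln (real n)"
  using euler_mascheroni_sequence_decreasing[of 1 n] assms by (simp add: harm_expand)

lemma sum_le_harm_of_rank_bound:
  fixes g r :: "'i \<Rightarrow> nat"
  assumes "finite I" and "inj_on r I" and "\<And>i. i \<in> I \<Longrightarrow> r i > 0"
    and "\<And>i. i \<in> I \<Longrightarrow> r i * g i \<le> c"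
  shows "(\<Sum>i\<in>I. real (g i)) \<le> real c * harm c"
proof -
  define h :: "nat \<Rightarrow> real" where "h m = (if m \<le> c then real c / real m else 0)" for m
  have "real (g i) \<le> h (r i)" if "i \<in> I" for i
  proof (cases "r i \<le> c")
    case True
    have "real (r i) * real (g i) \<le> real c"
      using assms(4)[OF that] by (metis of_nat_le_iff of_nat_mult)
    with assms(3)[OF that] True show ?thesis by (simp add: h_def field_simps)
  next
    case False
    have "r i * g i \<le> c" by (rule assms(4)[OF that])
    with False have "g i = 0" by (cases "g i") auto
    with False show ?thesis by (simp add: h_def)
  qed
  then have "(\<Sum>i\<in>I. real (g i)) \<le> (\<Sum>i\<in>I. h (r i))" by (rule sum_mono)
  also have "\<dots> = (\<Sum>m\<in>r ` I. h m)" by (simp add: sum.reindex assms(2))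
  also have "\<dots> = (\<Sum>m\<in>r ` I \<inter> {1..c}. h m)"
    by (rule sum.mono_neutral_right) (use assms(1,3) in \<open>auto simp: h_def Suc_le_eq\<close>)
  also have "\<dots> \<le> (\<Sum>m\<in>{1..c}. h m)"
    by (rule sum_mono2) (auto simp: h_def)
  also have "\<dots> = real c * harm c"
    by (simp add: harm_def h_def sum_distrib_left divide_inverse)
  finally show ?thesis .
qed

lemma strict_mono_on_card_le:
  fixes P :: "nat \<Rightarrow> bool"
  shows "strict_mono_on {i. P i} (\<lambda>i. card {a. a \<le> i \<and> P a})"
proof (rule strict_mono_onI)
  fix i j assume "i \<in> {i. P i}" "j \<in> {i. P i}" "i < j"
  then have "j \<in> {a. a \<le> j \<and> P a} - {a. a \<le> i \<and> P a}" by simp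
  moreover have "{a. a \<le> i \<and> P a} \<subseteq> {a. a \<le> j \<and> P a}" using \<open>i < j\<close> by auto
  ultimately have "{a. a \<le> i \<and> P a} \<subset> {a. a \<le> j \<and> P a}" by blast
  then show "card {a. a \<le> i \<and> P a} < card {a. a \<le> j \<and> P a}"
    by (rule psubset_card_mono[rotated]) simp
qed

lemma card_Int_nth_image:
  assumes "distinct vs" and "S \<subseteq> {..<length vs}"
  shows "card (P \<inter> (!) vs ` S) = card {i \<in> S. vs ! i \<in> P}"
proof -
  have "P \<inter> (!) vs ` S = (!) vs ` {i \<in> S. vs ! i \<in> P}" by auto
  moreover have "inj_on ((!) vs) {i \<in> S. vs ! i \<in> P}"
    using assms by (intro inj_on_nth) auto
  ultimately show ?thesis by (simp add: card_image)
qed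

lemma set_drop_eq_nth_image: "set (drop t vs) = (!) vs ` {t..<length vs}"
proof safe
  fix x assume "x \<in> set (drop t vs)"
  then obtain i where "i < length vs - t" "x = vs ! (t + i)"
    by (auto simp: in_set_conv_nth)
  then show "x \<in> (!) vs ` {t..<length vs}" by (intro image_eqI[of _ _ "t + i"]) auto
next
  fix i assume "i \<in> {t..<length vs}"
  then have "vs ! i = drop t vs ! (i - t)" and "i - t < length (drop t vs)" by auto
  then show "vs ! i \<in> set (drop t vs)" by (metis nth_mem)
qed

lemma card_Int_set_take:
  assumes "distinct vs" and "t \<le> length vs"
  shows "card (P \<inter> set (take t vs)) = card {i. i < t \<and> vs ! i \<in> P}"
proof -
  have "card (P \<inter> set (take t vs)) = card {i \<in> {0..<t}. vs ! i \<in> P}"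
    unfolding nth_image[OF assms(2), symmetric] using assms by (intro card_Int_nth_image) auto
  then show ?thesis by simp
qed

lemma card_Int_set_drop:
  assumes "distinct vs"
  shows "card (P \<inter> set (drop t vs)) = card {i. t \<le> i \<and> i < length vs \<and> vs ! i \<in> P}"
proof -
  have "card (P \<inter> set (drop t vs)) = card {i \<in> {t..<length vs}. vs ! i \<in> P}"
    unfolding set_drop_eq_nth_image using assms by (intro card_Int_nth_image) auto
  then show ?thesis by (simp add: conj_assoc)
qed

lemma card_Int_times_card_Int_le_arcs:
  assumes sc: "semi_complete V E" and "X \<inter> Y = {}" and "A \<subseteq> V" and "B \<subseteq> V"
  shows "card (Y \<inter> A) * card (X \<inter> B) \<le> card (arcs_between E Y X) + card (arcs_between E B A)"
proof -
  have "finite E"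
    using sc unfolding semi_complete_def by (meson finite_SigmaI finite_subset)
  then have fin: "finite (arcs_between E P Q)" for P Q
    by (rule finite_subset[rotated]) (auto simp: arcs_between_def)
  have "(Y \<inter> A) \<times> (X \<inter> B) \<subseteq> arcs_between E Y X \<union> prod.swap ` arcs_between E B A"
  proof safe
    fix a b assume "a \<in> Y" "a \<in> A" "b \<in> X" "b \<in> B" "(a, b) \<notin> prod.swap ` arcs_between E B A"
    moreover have "a \<noteq> b" and "a \<in> V" and "b \<in> V"
      using assms \<open>a \<in> Y\<close> \<open>b \<in> X\<close> \<open>a \<in> A\<close> \<open>b \<in> B\<close> by auto
    then have "(a, b) \<in> E \<or> (b, a) \<in> E" using sc unfolding semi_complete_def by blast
    ultimately show "(a, b) \<in> arcs_between E Y X"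
      unfolding arcs_between_def by (auto simp: image_iff)
  qed
  then have "card ((Y \<inter> A) \<times> (X \<inter> B)) \<le> card (arcs_between E Y X \<union> prod.swap ` arcs_between E B A)"
    using fin by (intro card_mono) auto
  also have "\<dots> \<le> card (arcs_between E Y X) + card (prod.swap ` arcs_between E B A)"
    by (rule card_Un_le)
  also have "card (prod.swap ` arcs_between E B A) = card (arcs_between E B A)"
    by (simp add: card_image)
  finally show ?thesis by (simp add: card_cartesian_product)
qed

lemma card_arcs_drop_take_le_width:
  "card (arcs_between E (set (drop t vs)) (set (take t vs))) \<le> ordering_width E vs"
proof (cases "1 \<le> t \<and> t \<le> length vs - 1")
  case True
  then show ?thesis unfolding ordering_width_def by (intro Max_ge) auto
next
  case False
  then have "take t vs = [] \<or> drop t vs = []" by auto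
  then show ?thesis by (auto simp: arcs_between_def)
qed

lemma card_before_times_card_after_le:
  assumes "semi_complete V E" and "is_ordering V vs" and "ordering_width E vs \<le> k"
    and "is_d_cut V E (real k) X Y" and "t \<le> length vs"
  shows "card {i. i < t \<and> vs ! i \<in> Y} * card {j. t \<le> j \<and> j < length vs \<and> vs ! j \<in> X} \<le> 2 * k"
proof -
  have "distinct vs" using assms(2) unfolding is_ordering_def by simp
  then have "card {i. i < t \<and> vs ! i \<in> Y} * card {j. t \<le> j \<and> j < length vs \<and> vs ! j \<in> X}
      = card (Y \<inter> set (take t vs)) * card (X \<inter> set (drop t vs))"
    by (simp add: card_Int_set_take card_Int_set_drop assms(5))
  also have "\<dots> \<le> card (arcs_between E Y X) + card (arcs_between E (set (drop t vs)) (set (take t vs)))"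
    using assms unfolding is_d_cut_def is_ordering_def
    by (intro card_Int_times_card_Int_le_arcs) (auto dest: in_set_takeD in_set_dropD)
  also have "\<dots> \<le> k + k"
    using assms(3,4) card_arcs_drop_take_le_width[of E t vs] unfolding is_d_cut_def by linarith
  finally show ?thesis by simp
qed

lemma card_arcs_transitive_tournament:
  "card (arcs_between (transitive_tournament vs) Y X)
     \<le> (\<Sum>i | i < length vs \<and> vs ! i \<in> Y. card {j. i < j \<and> j < length vs \<and> vs ! j \<in> X})"
proof -
  let ?I = "{i. i < length vs \<and> vs ! i \<in> Y}"
  let ?C = "\<lambda>i. {j. i < j \<and> j < length vs \<and> vs ! j \<in> X}"
  have "arcs_between (transitive_tournament vs) Y X \<subseteq> (\<lambda>(i, j). (vs ! i, vs ! j)) ` Sigma ?I ?C"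
    unfolding arcs_between_def transitive_tournament_def by force
  moreover have "finite (Sigma ?I ?C)" by auto
  ultimately have "card (arcs_between (transitive_tournament vs) Y X) \<le> card (Sigma ?I ?C)"
    using card_mono card_image_le le_trans by (metis (no_types, lifting) finite_imageI)
  also have "\<dots> = (\<Sum>i\<in>?I. card (?C i))" by (simp add: card_SigmaI)
  finally show ?thesis .
qed

theorem mainTheorem11:
  fixes V :: "'a set" and E :: "('a \<times> 'a) set" and vs :: "'a list" and k :: nat
    and X Y :: "'a set"
  assumes "k > 0"
    and "semi_complete V E"
    and "is_ordering V vs"
    and "ordering_width E vs \<le> k"
    and "is_d_cut V E (real k) X Y"
  shows "is_d_cut V (transitive_tournament vs) (2 * real k * (1 + ln (2 * real k))) X Y"
proof -
  define I where "I = {i. i < length vs \<and> vs ! i \<in> Y}"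
  define C where "C i = {j. i < j \<and> j < length vs \<and> vs ! j \<in> X}" for i
  define r where "r i = card {a. a \<le> i \<and> vs ! a \<in> Y}" for i
  have rank_bound: "r i * card (C i) \<le> 2 * k" if "i \<in> I" for i
    using card_before_times_card_after_le[OF assms(2-5), of "Suc i"] that
    unfolding r_def C_def I_def by (simp add: less_Suc_eq_le Suc_le_eq)
  have rank_inj: "inj_on r I"
    using strict_mono_on_imp_inj_on[OF strict_mono_on_card_le] unfolding r_def I_def
    by (rule inj_on_subset) auto
  have rank_pos: "r i > 0" if "i \<in> I" for i
    using that unfolding r_def I_def by (auto simp: card_gt_0_iff)
  have "real (card (arcs_between (transitive_tournament vs) Y X)) \<le> (\<Sum>i\<in>I. real (card (C i)))"
    using card_arcs_transitive_tournament[of vs Y X]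
    unfolding I_def C_def of_nat_sum[symmetric] of_nat_le_iff .
  also have "\<dots> \<le> real (2 * k) * harm (2 * k)"
    by (rule sum_le_harm_of_rank_bound[OF _ rank_inj rank_pos rank_bound]) (simp_all add: I_def)
  also have "\<dots> \<le> 2 * real k * (1 + ln (2 * real k))"
    using harm_le_one_plus_ln[of "2 * k"] assms(1) by (simp add: mult_left_mono)
  finally show ?thesis using assms(5) unfolding is_d_cut_def by simp
qed

end
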